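(* Under the hypotheses of the PC key inequality (with $\beta>0$, $\boldsymbol{H}_k=\boldsymbol{Q}_k\boldsymbol{M}_k^{-1}$ symmetric positive definite, $\boldsymbol{G}_k=\boldsymbol{Q}_k^T+\boldsymbol{Q}_k-\beta\boldsymbol{M}_k^T\boldsymbol{H}_k\boldsymbol{M}_k\succ0$, and $\boldsymbol{w}^{k+1}=\boldsymbol{w}^k-\beta\boldsymbol{M}_k(\boldsymbol{w}^k-\tilde{\boldsymbol{w}}^k)$), for every $\boldsymbol{w}^*\in\Omega^*$, $$\|\boldsymbol{w}^*-\boldsymbol{w}^{k+1}\|_{\boldsymbol{H}_k}^2\le\|\boldsymbol{w}^*-\boldsymbol{w}^k\|_{\boldsymbol{H}_k}^2-\beta\|\boldsymbol{w}^k-\tilde{\boldsymbol{w}}^k\|_{\boldsymbol{G}_k}^2.$$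
   Context: $\mathcal{X}\subset\mathbb{R}^n$ nonempty closed convex; $f$ convex; $\phi_1,\dots,\phi_m$ convex, continuously differentiable; $\Phi=(\phi_1,\dots,\phi_m)^T$ with $m\times n$ Jacobian $\mathcal{D}\Phi$; $\Omega=\mathcal{X}\times\mathbb{R}^m_+$; $\boldsymbol{\Gamma}(\boldsymbol{w})=(\mathcal{D}\Phi(\boldsymbol{x})^T\boldsymbol{\lambda},-\Phi(\boldsymbol{x}))$; $\Omega^*$ is the set of $\boldsymbol{w}^*=(\boldsymbol{x}^*,\boldsymbol{\lambda}^* )\in\Omega$ with $f(\boldsymbol{x})-f(\boldsymbol{x}^* )+(\boldsymbol{w}-\boldsymbol{w}^* )^T\boldsymbol{\Gamma}(\boldsymbol{w}^* )\ge0$ for all $\boldsymbol{w}\in\Omega$. $\boldsymbol{Q}_k=\begin{pmatrix} r_k\boldsymbol{I}_n & -\mathcal{D}\Phi(\tilde{\boldsymbol{x}}^k)^T\\ \boldsymbol{0} & s_k\boldsymbol{I}_m\end{pmatrix}$ ($r_k,s_k>0$), $\boldsymbol{M}_k$ invertible, and $\tilde{\boldsymbol{w}}^k\in\Omega$ satisfies $f(\boldsymbol{x})-f(\tilde{\boldsymbol{x}}^k)+(\boldsymbol{w}-\tilde{\boldsymbol{w}}^k)^T\boldsymbol{\Gamma}(\tilde{\boldsymbol{w}}^k)\ge(\boldsymbol{w}-\tilde{\boldsymbol{w}}^k)^T\boldsymbol{Q}_k(\boldsymbol{w}^k-\tilde{\boldsymbol{w}}^k)$ for all $\boldsymbol{w}\in\Omega$.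 $\|\boldsymbol{v}\|_{\boldsymbol{H}}^2=\boldsymbol{v}^T\boldsymbol{H}\boldsymbol{v}$. *)

theory Defs
  imports "HOL-Analysis.Analysis"
begin

text \<open>Vectors w = (x, lambda) in R^(n+m) are modelled as real^('n::finite + 'm::finite).\<close>

definition join :: "real^'n::finite \<Rightarrow> real^'m::finite \<Rightarrow> real^('n::finite + 'm::finite)" where
  "join x l = (\<chi> i. case i of Inl a \<Rightarrow> x $ a | Inr b \<Rightarrow> l $ b)"

definition xpart :: "real^('n::finite + 'm::finite) \<Rightarrow> real^'n::finite" where
  "xpart w = (\<chi> a. w $ Inl a)"

definition lpart :: "real^('n::finite + 'm::finite) \<Rightarrow> real^'m::finite" where
  "lpart w = (\<chi> b. w $ Inr b)"

definition jacobian :: "(real^'n::finite \<Rightarrow> real^'m::finite) \<Rightarrow> real^'n::finite \<Rightarrow> real^'n::finite^'m::finite" where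
  "jacobian Phi x = matrix (frechet_derivative Phi (at x))"

definition Omega :: "(real^'n::finite) set \<Rightarrow> (real^('n::finite + 'm::finite)) set" where
  "Omega X = {w. xpart w \<in> X \<and> (\<forall>j. lpart w $ j \<ge> 0)}"

definition Gamma :: "(real^'n::finite \<Rightarrow> real^'m::finite) \<Rightarrow> real^('n::finite + 'm::finite) \<Rightarrow> real^('n::finite + 'm::finite)" where
  "Gamma Phi w = join (transpose (jacobian Phi (xpart w)) *v lpart w) (- Phi (xpart w))"

definition Omega_star :: "(real^'n::finite) set \<Rightarrow> (real^'n::finite \<Rightarrow> real) \<Rightarrow> (real^'n::finite \<Rightarrow> real^'m::finite)
    \<Rightarrow> (real^('n::finite + 'm::finite)) set" where
  "Omega_star X f Phi = {ws \<in> Omega X. \<forall>w \<in> Omega X.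
      f (xpart w) - f (xpart ws) + (w - ws) \<bullet> Gamma Phi ws \<ge> 0}"

text \<open>Q_k = [[r I_n, - DPhi(x~)^T], [0, s I_m]].\<close>
definition Qmat :: "real \<Rightarrow> real \<Rightarrow> real^'n::finite^'m::finite \<Rightarrow> real^('n::finite + 'm::finite)^('n::finite + 'm::finite)" where
  "Qmat r s J = (\<chi> i j. case i of
      Inl a \<Rightarrow> (case j of Inl b \<Rightarrow> (if a = b then r else 0) | Inr b \<Rightarrow> - (J $ b $ a))
    | Inr a \<Rightarrow> (case j of Inl b \<Rightarrow> 0 | Inr b \<Rightarrow> (if a = b then s else 0)))"

definition normsq :: "real^'k::finite^'k::finite \<Rightarrow> real^'k::finite \<Rightarrow> real" where
  "normsq H v = v \<bullet> (H *v v)"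

definition sym_pos_def :: "real^'k::finite^'k::finite \<Rightarrow> bool" where
  "sym_pos_def A \<longleftrightarrow> transpose A = A \<and> (\<forall>v. v \<noteq> 0 \<longrightarrow> v \<bullet> (A *v v) > 0)"

end

theory Submission
  imports Defs
begin

text \<open>Adding the variational inequalities of the predictor \<open>wt\<close> (tested at \<open>ws\<close>) and of the
  solution \<open>ws\<close> (tested at \<open>wt\<close>) cancels \<open>f\<close>; monotonicity of \<open>Gamma\<close>, which comes from the
  gradient inequality of each convex \<open>\<phi>\<^sub>i\<close> and \<open>\<lambda> \<ge> 0\<close>, then gives
  \<open>(ws - wt) \<bullet> Q (wk - wt) \<le> 0\<close>. Expanding the \<open>H\<close>-norm of \<open>ws - wk1\<close> with \<open>H M = Q\<close> and
  \<open>H\<close> symmetric yields the exact identity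
  \<open>\<parallel>ws - wk1\<parallel>\<^sup>2\<^sub>H = \<parallel>ws - wk\<parallel>\<^sup>2\<^sub>H - \<beta> \<parallel>wk - wt\<parallel>\<^sup>2\<^sub>G + 2\<beta> (ws - wt) \<bullet> Q (wk - wt)\<close>,
  whose last term is therefore nonpositive.\<close>

lemma jacobian_has_derivative:
  fixes Phi :: "real^'n \<Rightarrow> real^'m"
  assumes "Phi differentiable (at y)"
  shows "(Phi has_derivative (\<lambda>h. jacobian Phi y *v h)) (at y)"
  using assms Cartesian_Euclidean_Space.jacobian_works[of Phi "at y"]
  by (simp add: Defs.jacobian_def Cartesian_Euclidean_Space.jacobian_def)

lemma convex_on_ge_tangent:
  fixes g :: "'a::real_normed_vector \<Rightarrow> real"
  assumes convex: "convex_on UNIV g" and deriv: "(g has_derivative D) (at y)"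
  shows "g x \<ge> g y + D (x - y)"
proof -
  define h where "h t = g (y + t *\<^sub>R (x - y))" for t :: real
  have "convex_on UNIV h"
  proof (rule convex_onI)
    fix a t u :: real assume a: "0 < a" "a < 1"
    have "y + ((1 - a) * t + a * u) *\<^sub>R (x - y)
        = (1 - a) *\<^sub>R (y + t *\<^sub>R (x - y)) + a *\<^sub>R (y + u *\<^sub>R (x - y))"
      by (simp add: algebra_simps)
    then show "h ((1 - a) *\<^sub>R t + a *\<^sub>R u) \<le> (1 - a) * h t + a * h u"
      unfolding h_def using convex_onD[OF convex, of a] a by auto
  qed simp
  moreover have "(h has_field_derivative D (x - y)) (at 0)"
  proof -
    have "((\<lambda>t. y + t *\<^sub>R (x - y)) has_derivative (\<lambda>t. t *\<^sub>R (x - y))) (at 0)"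
      by (auto intro!: derivative_eq_intros)
    then have "(h has_derivative (\<lambda>t. D (t *\<^sub>R (x - y)))) (at 0)"
      unfolding h_def using has_derivative_compose[of "\<lambda>t. y + t *\<^sub>R (x - y)" _ 0 UNIV g D] deriv
      by (simp add: o_def)
    moreover have "(\<lambda>t. D (t *\<^sub>R (x - y))) = (\<lambda>t. D (x - y) * t)"
      using has_derivative_linear[OF deriv] by (auto simp: linear_scale)
    ultimately show ?thesis by (simp add: has_field_derivative_def)
  qed
  ultimately have "h 1 - h 0 \<ge> D (x - y) * (1 - 0)"
    using convex_on_imp_above_tangent[of UNIV h 0 1] by simp
  then show ?thesis by (simp add: h_def)
qed

lemma inner_join:
  fixes u :: "real^('n::finite + 'm::finite)"
  shows "u \<bullet> join a b = xpart u \<bullet> a + lpart u \<bullet> b"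
proof -
  have U: "(UNIV :: ('n + 'm) set) = UNIV <+> UNIV" by (simp add: UNIV_Plus_UNIV)
  show ?thesis
    unfolding inner_vec_def join_def xpart_def lpart_def
    by (subst U, subst sum.Plus) (simp_all add: o_def)
qed

lemma xpart_diff: "xpart (u - v) = xpart u - xpart v"
  by (simp add: xpart_def vec_eq_iff)

lemma lpart_diff: "lpart (u - v) = lpart u - lpart v"
  by (simp add: lpart_def vec_eq_iff)

lemma inner_transpose_matrix_vector: "(x::real^'n) \<bullet> (transpose A *v y) = (A *v x) \<bullet> y"
  by (metis dot_lmul_matrix inner_commute vector_transpose_matrix)

lemma Gamma_monotone:
  fixes Phi :: "real^'n \<Rightarrow> real^'m"
  assumes Phi_convex: "\<And>i. convex_on UNIV (\<lambda>x. Phi x $ i)"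
    and Phi_diff: "\<And>x. Phi differentiable (at x)"
    and "\<forall>j. lpart u $ j \<ge> 0" and "\<forall>j. lpart v $ j \<ge> 0"
  shows "(u - v) \<bullet> (Gamma Phi u - Gamma Phi v) \<ge> 0"
proof -
  have tangent: "Phi x $ i \<ge> Phi y $ i + (jacobian Phi y *v (x - y)) $ i" for x y i
    using convex_on_ge_tangent[OF Phi_convex
        bounded_linear.has_derivative[OF bounded_linear_vec_nth jacobian_has_derivative[OF Phi_diff]]] .
  have weighted_gap: "lpart w \<bullet> (Phi x - Phi (xpart w) - jacobian Phi (xpart w) *v (x - xpart w)) \<ge> 0"
    if "\<forall>j. lpart w $ j \<ge> 0" for w x
    unfolding inner_vec_def inner_real_def
  proof (intro sum_nonneg mult_nonneg_nonneg)
    fix j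
    show "0 \<le> lpart w $ j" using that by blast
    show "0 \<le> (Phi x - Phi (xpart w) - jacobian Phi (xpart w) *v (x - xpart w)) $ j"
      using tangent[where y="xpart w" and x=x and i=j] by simp
  qed
  define x y where "x = xpart u" and "y = xpart v"
  define Ju Jv where "Ju = jacobian Phi x" and "Jv = jacobian Phi y"
  have "(u - v) \<bullet> (Gamma Phi u - Gamma Phi v)
      = (x - y) \<bullet> (transpose Ju *v lpart u) - (x - y) \<bullet> (transpose Jv *v lpart v)
        + (lpart u - lpart v) \<bullet> (Phi y - Phi x)"
  proof -
    have "Gamma Phi u - Gamma Phi v
        = join (transpose Ju *v lpart u - transpose Jv *v lpart v) (Phi y - Phi x)"
      unfolding Gamma_def join_def x_def y_def Ju_def Jv_def by (simp add: vec_eq_iff split: sum.splits)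
    then show ?thesis by (simp add: inner_join xpart_diff lpart_diff x_def y_def inner_diff_right)
  qed
  also have "\<dots> = lpart u \<bullet> (Phi y - Phi x - Ju *v (y - x))
                 + lpart v \<bullet> (Phi x - Phi y - Jv *v (x - y))"
    unfolding inner_transpose_matrix_vector
    by (simp add: inner_commute[of _ "lpart u"] inner_commute[of _ "lpart v"]
        matrix_vector_mult_diff_distrib inner_diff_right algebra_simps del: transpose_matrix_vector)
  finally show ?thesis
    using weighted_gap[OF assms(3), of y] weighted_gap[OF assms(4), of x]
    unfolding x_def y_def Ju_def Jv_def by linarith
qed

lemma predictor_solution_angle:
  fixes Phi :: "real^'n \<Rightarrow> real^'m" and Q :: "real^('n + 'm)^('n + 'm)"
  assumes Phi_convex: "\<And>i. convex_on UNIV (\<lambda>x. Phi x $ i)"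
    and Phi_diff: "\<And>x. Phi differentiable (at x)"
    and wt_Omega: "wt \<in> Omega X"
    and wt_VI: "\<forall>w \<in> Omega X. f (xpart w) - f (xpart wt) + (w - wt) \<bullet> Gamma Phi wt
                 \<ge> (w - wt) \<bullet> (Q *v (wk - wt))"
    and ws_star: "ws \<in> Omega_star X f Phi"
  shows "(ws - wt) \<bullet> (Q *v (wk - wt)) \<le> 0"
proof -
  have ws_Omega: "ws \<in> Omega X"
    and ws_VI: "f (xpart wt) - f (xpart ws) + (wt - ws) \<bullet> Gamma Phi ws \<ge> 0"
    using ws_star wt_Omega unfolding Omega_star_def by auto
  have "f (xpart ws) - f (xpart wt) + (ws - wt) \<bullet> Gamma Phi wt \<ge> (ws - wt) \<bullet> (Q *v (wk - wt))"
    using wt_VI ws_Omega by blast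
  moreover have "(wt - ws) \<bullet> (Gamma Phi wt - Gamma Phi ws) \<ge> 0"
    using Gamma_monotone[OF Phi_convex Phi_diff] wt_Omega ws_Omega unfolding Omega_def by blast
  moreover have "(ws - wt) \<bullet> Gamma Phi wt = - ((wt - ws) \<bullet> Gamma Phi wt)"
    by (metis inner_minus_left minus_diff_eq)
  ultimately show ?thesis using ws_VI by (simp add: inner_diff_right)
qed

lemma matrix_inv_mult_left:
  fixes M :: "real^'k^'k"
  assumes "invertible M"
  shows "matrix_inv M ** M = mat 1"
proof -
  have "\<exists>A. M ** A = mat 1 \<and> A ** M = mat 1" using assms unfolding invertible_def by blast
  from someI_ex[OF this] show ?thesis unfolding matrix_inv_def by blast
qed

lemma normsq_correction_step:
  fixes H M :: "real^'k^'k"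
  assumes H_sym: "transpose H = H"
    and update: "wk1 = wk - beta *\<^sub>R (M *v (wk - wt))"
  shows "normsq H (ws - wk1)
       = normsq H (ws - wk) - beta * normsq (transpose (H ** M) + H ** M - beta *\<^sub>R (transpose M ** H ** M)) (wk - wt)
         + 2 * beta * ((ws - wt) \<bullet> ((H ** M) *v (wk - wt)))"
proof -
  define d where "d = wk - wt"
  define a where "a = ws - wk"
  define b where "b = M *v d"
  have H_swap: "u \<bullet> (H *v v) = v \<bullet> (H *v u)" for u v
    by (metis H_sym inner_transpose_matrix_vector inner_commute)
  have Hb: "H *v b = (H ** M) *v d" by (simp add: b_def matrix_vector_mul_assoc)
  have bHb: "b \<bullet> ((H ** M) *v d) = d \<bullet> ((transpose M ** H ** M) *v d)"
    by (metis Hb b_def inner_transpose_matrix_vector matrix_vector_mul_assoc)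
  have "normsq H (ws - wk1) = a \<bullet> (H *v a) + beta * (a \<bullet> (H *v b)) + beta * (b \<bullet> (H *v a))
      + beta * beta * (b \<bullet> (H *v b))"
    unfolding normsq_def update a_def b_def d_def
    by (simp add: matrix_vector_right_distrib matrix_vector_mult_scaleR inner_add_left
        inner_add_right algebra_simps)
  also have "\<dots> = normsq H (ws - wk) + 2 * beta * (a \<bullet> ((H ** M) *v d))
      + beta\<^sup>2 * (d \<bullet> ((transpose M ** H ** M) *v d))"
    using H_swap[of b a] by (simp add: normsq_def a_def Hb bHb power2_eq_square)
  also have "\<dots> = normsq H (ws - wk)
      - beta * normsq (transpose (H ** M) + H ** M - beta *\<^sub>R (transpose M ** H ** M)) d
      + 2 * beta * ((a + d) \<bullet> ((H ** M) *v d))"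
  proof -
    have "d \<bullet> (transpose (H ** M) *v d) = d \<bullet> ((H ** M) *v d)"
      by (metis inner_transpose_matrix_vector inner_commute)
    then show ?thesis
      unfolding normsq_def
      by (simp add: matrix_vector_mult_add_rdistrib matrix_vector_mult_diff_rdistrib
          scaleR_matrix_vector_assoc[symmetric] inner_add_left inner_diff_right
          algebra_simps power2_eq_square)
  qed
  also have "a + d = ws - wt" by (simp add: a_def d_def)
  finally show ?thesis unfolding d_def .
qed

theorem theorem4:
  fixes X :: "(real^'n) set" and f :: "real^'n \<Rightarrow> real" and Phi :: "real^'n \<Rightarrow> real^'m"
    and r s beta :: real and M :: "real^('n + 'm)^('n + 'm)"
    and wk wt wk1 ws :: "real^('n + 'm)"
  assumes X: "X \<noteq> {}" "closed X" "convex X"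
    and f_convex: "convex_on UNIV f"
    and Phi_convex: "\<And>i. convex_on UNIV (\<lambda>x. Phi x $ i)"
    and Phi_diff: "\<And>x. Phi differentiable (at x)"
    and Phi_C1: "continuous_on UNIV (jacobian Phi)"
    and rs: "r > 0" "s > 0"
    and M_inv: "invertible M"
    and wt_Omega: "wt \<in> Omega X"
    and wt_VI: "\<forall>w \<in> Omega X. f (xpart w) - f (xpart wt) + (w - wt) \<bullet> Gamma Phi wt
                 \<ge> (w - wt) \<bullet> (Qmat r s (jacobian Phi (xpart wt)) *v (wk - wt))"
    and beta: "beta > 0"
    and H_pd: "sym_pos_def (Qmat r s (jacobian Phi (xpart wt)) ** matrix_inv M)"
    and G_pd: "sym_pos_def (transpose (Qmat r s (jacobian Phi (xpart wt)))
                 + Qmat r s (jacobian Phi (xpart wt))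
                 - beta *\<^sub>R (transpose M ** (Qmat r s (jacobian Phi (xpart wt)) ** matrix_inv M) ** M))"
    and update: "wk1 = wk - beta *\<^sub>R (M *v (wk - wt))"
    and ws_star: "ws \<in> Omega_star X f Phi"
  shows "normsq (Qmat r s (jacobian Phi (xpart wt)) ** matrix_inv M) (ws - wk1)
         \<le> normsq (Qmat r s (jacobian Phi (xpart wt)) ** matrix_inv M) (ws - wk)
            - beta * normsq (transpose (Qmat r s (jacobian Phi (xpart wt)))
                 + Qmat r s (jacobian Phi (xpart wt))
                 - beta *\<^sub>R (transpose M ** (Qmat r s (jacobian Phi (xpart wt)) ** matrix_inv M) ** M)) (wk - wt)"
proof -
  define Q where "Q = Qmat r s (jacobian Phi (xpart wt))"
  define H where "H = Q ** matrix_inv M"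
  have HM: "H ** M = Q"
    by (metis H_def matrix_mul_assoc matrix_inv_mult_left[OF M_inv] matrix_mul_rid)
  have H_sym: "transpose H = H" using H_pd unfolding sym_pos_def_def H_def Q_def by blast
  have "(ws - wt) \<bullet> (Q *v (wk - wt)) \<le> 0"
    using predictor_solution_angle[OF Phi_convex Phi_diff wt_Omega _ ws_star] wt_VI
    unfolding Q_def by blast
  with beta have "2 * beta * ((ws - wt) \<bullet> (Q *v (wk - wt))) \<le> 0"
    by (simp add: mult_nonneg_nonpos)
  moreover note normsq_correction_step[OF H_sym update, of ws]
  ultimately show ?thesis unfolding HM unfolding H_def Q_def by linarith
qed

end
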